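(* The bilinear form $\langle\cdot,\cdot\rangle:V_\lambda^*\times V_\lambda\to\mathbb Q(s)$ defined on basis elements by $\langle\mathbb T_1^*,\mathbb T_2\rangle=0$ for $\mathbb T_1\ne\mathbb T_2$ and $\langle\mathbb T^*,\mathbb T\rangle=\nu(\mathbb T)$, and extended by linearity, satisfies $\langle P^*T_i^*,QT_i\rangle=\langle P^*,Q\rangle$ for all $P^*\in V_\lambda^*$, $Q\in V_\lambda$ and $1\le i\le N-1$.
   Context: $N\ge2$, $s$ an indeterminate. $\mathcal H_N(s)$ is generated by $T_1,\dots,T_{N-1}$ with $(T_i+1)(T_i-s)=0$, $T_iT_{i+1}T_i=T_{i+1}T_iT_{i+1}$, $T_iT_j=T_jT_i$ ($|i-j|>1$); modules are right modules. $\lambda$ is a partition of $N$ (French convention, rows numbered bottom to top); $\mathrm{Tab}_\lambda$ = reverse standard tableaux (bijective fillings by $1,\dots,N$ strictly decreasing left to right in rows and bottom to top in columns); $\mathrm{CT}_{\mathbb T}[i]$ = column minus row of the cell of $i$; $\mathbb T^{(i,j)}$ exchanges $i,j$. $V_\lambda$ has basis $\mathrm{Tab}_\lambda$, right action $\mathbb TT_i=s\mathbb T$ if $i,i+1$ share a row, $-\mathbb T$ if they share a column, and if $i$ is in a higher row than $i+1$, with $m=\mathrm{CT}_{\mathbb T}[i+1]-\mathrm{CT}_{\mathbb T}[i]>0$, $\mathbb TT_i=\frac{s-1}{1-s^m}\mathbb T+\frac{s(1-s^{m+1})(1-s^{m-1})}{(1-s^m)^2}\mathbb T^{(i,i+1)}$;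 remaining case determined by this formula for $\mathbb T^{(i,i+1)}$ and the quadratic relation. $V_\lambda^*$ is the analogous module of $\mathcal H_N(s^{-1})$ (all formulas with $s$ replaced by $s^{-1}$), with basis $\{\mathbb T^*:\mathbb T\in\mathrm{Tab}_\lambda\}$ and generators acting as $T_i^*$. $\nu(\mathbb T):=\prod\frac{(1-s^{\mathrm{CT}_{\mathbb T}[j]-\mathrm{CT}_{\mathbb T}[i]-1})(1-s^{\mathrm{CT}_{\mathbb T}[j]-\mathrm{CT}_{\mathbb T}[i]+1})}{(1-s^{\mathrm{CT}_{\mathbb T}[j]-\mathrm{CT}_{\mathbb T}[i]})^2}$, the product over pairs $1\le i<j\le N$ with $\mathrm{CT}_{\mathbb T}[i]-\mathrm{CT}_{\mathbb T}[j]\le-2$. *)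

theory Defs
  imports Main "HOL-Computational_Algebra.Polynomial" "HOL-Computational_Algebra.Fraction_Field"
begin

type_synonym ratfun = "rat poly fract"

definition s_ind :: ratfun where
  "s_ind = Fract [:0, 1:] 1"

(* A partition of N: a list of positive, weakly decreasing parts summing to N.
   Row r (0-based, counted from the bottom, French convention) has length lam ! r. *)
definition is_partition :: "nat list \<Rightarrow> nat \<Rightarrow> bool" where
  "is_partition lam N \<longleftrightarrow> sorted_wrt (\<ge>) lam \<and> (\<forall>x\<in>set lam. 0 < x) \<and> sum_list lam = N"

definition cells :: "nat list \<Rightarrow> (nat \<times> nat) set" where
  "cells lam = {(r, c). r < length lam \<and> c < lam ! r}"

(* A filling assigns to each cell a number; value 0 outside the diagram (extensionality). *)
type_synonym tableau = "nat \<times> nat \<Rightarrow> nat"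

definition Tab :: "nat list \<Rightarrow> tableau set" where
  "Tab lam = {T. bij_betw T (cells lam) {1..sum_list lam}
      \<and> (\<forall>x. x \<notin> cells lam \<longrightarrow> T x = 0)
      \<and> (\<forall>r c. (r, c + 1) \<in> cells lam \<longrightarrow> T (r, c + 1) < T (r, c))
      \<and> (\<forall>r c. (r + 1, c) \<in> cells lam \<longrightarrow> T (r + 1, c) < T (r, c))}"

definition pos :: "nat list \<Rightarrow> tableau \<Rightarrow> nat \<Rightarrow> nat \<times> nat" where
  "pos lam T i = (THE x. x \<in> cells lam \<and> T x = i)"

definition rw :: "nat list \<Rightarrow> tableau \<Rightarrow> nat \<Rightarrow> nat" where
  "rw lam T i = fst (pos lam T i)"

definition cl :: "nat list \<Rightarrow> tableau \<Rightarrow> nat \<Rightarrow> nat" where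
  "cl lam T i = snd (pos lam T i)"

definition CT :: "nat list \<Rightarrow> tableau \<Rightarrow> nat \<Rightarrow> int" where
  "CT lam T i = int (cl lam T i) - int (rw lam T i)"

definition swp :: "tableau \<Rightarrow> nat \<Rightarrow> nat \<Rightarrow> tableau" where
  "swp T i j = (\<lambda>x. if T x = i then j else if T x = j then i else T x)"

(* Coefficient of the basis vector T' in  T \<cdot> T_i, for the module with parameter q
   (q = s gives V_lambda, q = s^{-1} gives V_lambda^* ).
   The last case (i in a lower row than i+1) is the one "determined by the formula
   for T^{(i,i+1)} and the quadratic relation"; solving gives
   T T_i = T^{(i,i+1)} + (q - 1 - (q-1)/(1-q^m)) T  with m = CT_T[i] - CT_T[i+1]. *)
definition hcoeff :: "ratfun \<Rightarrow> nat list \<Rightarrow> nat \<Rightarrow> tableau \<Rightarrow> tableau \<Rightarrow> ratfun" where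
  "hcoeff q lam i T T' =
     (if rw lam T i = rw lam T (i + 1) then (if T' = T then q else 0)
      else if cl lam T i = cl lam T (i + 1) then (if T' = T then -1 else 0)
      else if rw lam T i > rw lam T (i + 1) then
        (let m = CT lam T (i + 1) - CT lam T i in
          if T' = T then (q - 1) / (1 - q powi m)
          else if T' = swp T i (i + 1) then
            q * (1 - q powi (m + 1)) * (1 - q powi (m - 1)) / (1 - q powi m)\<^sup>2
          else 0)
      else
        (let m = CT lam T i - CT lam T (i + 1) in
          if T' = T then q - 1 - (q - 1) / (1 - q powi m)
          else if T' = swp T i (i + 1) then 1
          else 0))"

(* Vectors of V_lambda (resp. V_lambda^* ) are coordinate functions on Tab lam.
   Right action of the generator T_i, extended linearly. *)
definition act :: "ratfun \<Rightarrow> nat list \<Rightarrow> nat \<Rightarrow> (tableau \<Rightarrow> ratfun) \<Rightarrow> (tableau \<Rightarrow> ratfun)" where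
  "act q lam i v = (\<lambda>T'. \<Sum>T\<in>Tab lam. v T * hcoeff q lam i T T')"

definition nu :: "nat list \<Rightarrow> tableau \<Rightarrow> ratfun" where
  "nu lam T = (\<Prod>(i, j) \<in> {(i, j). 1 \<le> i \<and> i < j \<and> j \<le> sum_list lam
                                  \<and> CT lam T i - CT lam T j \<le> -2}.
     (let d = CT lam T j - CT lam T i in
       (1 - s_ind powi (d - 1)) * (1 - s_ind powi (d + 1)) / (1 - s_ind powi d)\<^sup>2))"

definition pairing :: "nat list \<Rightarrow> (tableau \<Rightarrow> ratfun) \<Rightarrow> (tableau \<Rightarrow> ratfun) \<Rightarrow> ratfun" where
  "pairing lam P Q = (\<Sum>T\<in>Tab lam. P T * Q T * nu lam T)"

end

theory Submission
  imports Defs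
begin

(* In the basis of tableaux, T_i maps a tableau T to a multiple of itself when i and i + 1 share a
   row or a column, and otherwise acts on the plane spanned by T and T^(i,i+1). The form is diagonal
   in this basis, so its invariance reduces to one identity per block. If i lies in a higher row than
   i + 1, its content is smaller by some m >= 2; exchanging i and i + 1 permutes the pairs entering nu
   except (i, i + 1) itself, so nu(T) = w_m nu(T^(i,i+1)) with
   w_m = (1 - s^(m-1)) (1 - s^(m+1)) / (1 - s^m)^2. Since s w_m is also the off-diagonal coefficient of
   T_i, the 2x2 matrices of T_i^* and T_i on the block are adjoint with respect to diag(w_m, 1), a
   rational identity in s and s^m. *)

lemma invariant_weighted_pairing:
  fixes g h :: "'b \<Rightarrow> 'b \<Rightarrow> 'a::comm_semiring_0"
  assumes "finite A"
    and orth: "\<And>X Y. X \<in> A \<Longrightarrow> Y \<in> A \<Longrightarrow> (\<Sum>Z\<in>A. g X Z * h Y Z * w Z) = (if X = Y then w X else 0)"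
  shows "(\<Sum>Z\<in>A. (\<Sum>X\<in>A. P X * g X Z) * (\<Sum>Y\<in>A. Q Y * h Y Z) * w Z) = (\<Sum>X\<in>A. P X * Q X * w X)"
proof -
  have expand: "(\<Sum>X\<in>A. P X * g X Z) * (\<Sum>Y\<in>A. Q Y * h Y Z) * w Z
      = (\<Sum>X\<in>A. \<Sum>Y\<in>A. P X * Q Y * (g X Z * h Y Z * w Z))" for Z
    unfolding sum_distrib_left sum_distrib_right by (subst sum.swap) (simp only: mult_ac)
  have "(\<Sum>Z\<in>A. (\<Sum>X\<in>A. P X * g X Z) * (\<Sum>Y\<in>A. Q Y * h Y Z) * w Z)
      = (\<Sum>Z\<in>A. \<Sum>X\<in>A. \<Sum>Y\<in>A. P X * Q Y * (g X Z * h Y Z * w Z))"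
    by (rule sum.cong[OF refl expand])
  also have "\<dots> = (\<Sum>X\<in>A. \<Sum>Y\<in>A. \<Sum>Z\<in>A. P X * Q Y * (g X Z * h Y Z * w Z))"
    by (subst sum.swap) (rule sum.cong[OF refl sum.swap])
  also have "\<dots> = (\<Sum>X\<in>A. \<Sum>Y\<in>A. P X * Q Y * (\<Sum>Z\<in>A. g X Z * h Y Z * w Z))"
    by (simp add: sum_distrib_left)
  also have "\<dots> = (\<Sum>X\<in>A. \<Sum>Y\<in>A. if X = Y then P X * Q Y * w X else 0)"
    by (intro sum.cong refl) (simp add: orth)
  also have "\<dots> = (\<Sum>X\<in>A. P X * Q X * w X)"
    using \<open>finite A\<close> by simp
  finally show ?thesis .
qed

definition pair_weight :: "'a::field \<Rightarrow> int \<Rightarrow> 'a" where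
  "pair_weight q d = (1 - q powi (d - 1)) * (1 - q powi (d + 1)) / (1 - q powi d)\<^sup>2"

definition diag_coeff :: "'a::field \<Rightarrow> int \<Rightarrow> 'a" where
  "diag_coeff q m = (q - 1) / (1 - q powi m)"

text \<open>On the block spanned by \<open>U\<close> and \<open>V = swp U i (i + 1)\<close>, where \<open>i\<close> lies above \<open>i + 1\<close> in \<open>U\<close>,
  \<open>T\<^sub>i\<close> sends \<open>U\<close> to \<open>a U + q w V\<close> and \<open>V\<close> to \<open>U + (q - 1 - a) V\<close>, and \<open>\<nu>(U) = w r\<close>, \<open>\<nu>(V) = r\<close>.
  The four identities are the entries of the adjointness relation for these \<open>2 \<times> 2\<close> matrices.\<close>

lemma adjoint_block_identities:
  fixes q r :: "'a::field" and m :: int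
  assumes q: "q \<noteq> 0" and qm: "q powi m \<noteq> 1"
  defines "w \<equiv> pair_weight q m" and "w' \<equiv> pair_weight (inverse q) m"
    and "a \<equiv> diag_coeff q m" and "a' \<equiv> diag_coeff (inverse q) m"
  shows "a' * a * (w * r) + inverse q * w' * (q * w) * r = w * r"
    and "a' * (w * r) + inverse q * w' * (q - 1 - a) * r = 0"
    and "(inverse q - 1 - a') * (q * w) * r + a * (w * r) = 0"
    and "(inverse q - 1 - a') * (q - 1 - a) * r + w * r = r"
proof -
  define x where "x = q powi m"
  have x: "x \<noteq> 0" "1 - x \<noteq> 0" "1 - inverse x \<noteq> 0"
    using q qm by (auto simp: x_def field_simps)
  have inv: "q * inverse q = 1" "x * inverse x = 1" "(1 - x) * inverse (1 - x) = 1"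
    "(1 - inverse x) * inverse (1 - inverse x) = 1"
    using q x by auto
  have "q powi (m + 1) = x * q" "q powi (m - 1) = x * inverse q"
    using q by (simp_all add: x_def power_int_add_1 power_int_diff divide_inverse)
  note unfold = this w_def w'_def a_def a'_def pair_weight_def diag_coeff_def power_int_inverse
    x_def[symmetric] inverse_mult_distrib inverse_inverse_eq divide_inverse power2_eq_square
  show "a' * a * (w * r) + inverse q * w' * (q * w) * r = w * r"
    unfolding unfold using inv by algebra
  show "a' * (w * r) + inverse q * w' * (q - 1 - a) * r = 0"
    unfolding unfold using inv by algebra
  show "(inverse q - 1 - a') * (q * w) * r + a * (w * r) = 0"
    unfolding unfold using inv by algebra
  show "(inverse q - 1 - a') * (q - 1 - a) * r + w * r = r"
    unfolding unfold using inv by algebra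
qed

lemma finite_cells: "finite (cells lam)"
proof (rule finite_subset)
  show "cells lam \<subseteq> {..<length lam} \<times> {..sum_list lam}"
    using elem_le_sum_list by (fastforce simp: cells_def)
qed simp

lemma finite_Tab: "finite (Tab lam)"
proof -
  have "Tab lam \<subseteq> {f. \<forall>x. (x \<in> cells lam \<longrightarrow> f x \<in> {1..sum_list lam}) \<and> (x \<notin> cells lam \<longrightarrow> f x = 0)}"
    by (auto simp: Tab_def bij_betw_def)
  then show ?thesis
    by (rule finite_subset) (intro finite_set_of_finite_funs finite_cells finite_atLeastAtMost)
qed

lemma Tab_ex1_cell:
  assumes "T \<in> Tab lam" "v \<in> {1..sum_list lam}"
  shows "\<exists>!x. x \<in> cells lam \<and> T x = v"
proof -
  have bij: "bij_betw T (cells lam) {1..sum_list lam}"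
    using assms(1) by (simp add: Tab_def)
  then have "v \<in> T ` cells lam"
    using assms(2) by (simp add: bij_betw_def)
  then obtain x where "x \<in> cells lam" "T x = v" by blast
  with bij show ?thesis
    unfolding bij_betw_def inj_on_def by blast
qed

lemma pos_in_cells: "T \<in> Tab lam \<Longrightarrow> v \<in> {1..sum_list lam} \<Longrightarrow> pos lam T v \<in> cells lam"
  unfolding pos_def by (drule (1) Tab_ex1_cell) (drule theI', simp)

lemma entry_pos: "T \<in> Tab lam \<Longrightarrow> v \<in> {1..sum_list lam} \<Longrightarrow> T (pos lam T v) = v"
  unfolding pos_def by (drule (1) Tab_ex1_cell) (drule theI', simp)

lemma pos_entry:
  assumes "T \<in> Tab lam" "x \<in> cells lam"
  shows "pos lam T (T x) = x"
proof -
  have "T x \<in> {1..sum_list lam}"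
    using assms by (auto simp: Tab_def bij_betw_def)
  then show ?thesis
    unfolding pos_def using Tab_ex1_cell[OF assms(1)] assms(2) by (simp add: the1_equality)
qed

lemma swp_eq_comp: "swp T i j = id(i := j, j := i) \<circ> T"
  by (auto simp: swp_def fun_eq_iff)

lemma swp_swp [simp]: "swp (swp T i j) i j = T"
  by (auto simp: swp_def fun_eq_iff)

lemma pos_swp: "pos lam (swp T i j) a = pos lam T ((id(i := j, j := i)) a)"
proof -
  have "\<And>y. (id(i := j, j := i)) y = a \<longleftrightarrow> y = (id(i := j, j := i)) a"
    by auto
  then show ?thesis
    unfolding pos_def swp_eq_comp by simp
qed

lemma rw_swp: "rw lam (swp T i j) a = rw lam T ((id(i := j, j := i)) a)"
  by (simp add: rw_def pos_swp)

lemma cl_swp: "cl lam (swp T i j) a = cl lam T ((id(i := j, j := i)) a)"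
  by (simp add: cl_def pos_swp)

lemma CT_swp: "CT lam (swp T i j) = CT lam T \<circ> id(i := j, j := i)"
  by (simp add: fun_eq_iff CT_def rw_swp cl_swp)

lemma swp_neq:
  assumes "T \<in> Tab lam" "i \<in> {1..sum_list lam}" "i \<noteq> j"
  shows "swp T i j \<noteq> T"
proof
  assume "swp T i j = T"
  then have "swp T i j (pos lam T i) = T (pos lam T i)" by simp
  with assms show False by (simp add: swp_def entry_pos)
qed

lemma cells_left_closed: "(r, c') \<in> cells lam \<Longrightarrow> c \<le> c' \<Longrightarrow> (r, c) \<in> cells lam"
  by (auto simp: cells_def)

lemma cells_down_closed:
  assumes "sorted_wrt (\<ge>) lam" "(r', c) \<in> cells lam" "r \<le> r'"
  shows "(r, c) \<in> cells lam"
proof (cases "r = r'")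
  case False
  then have "lam ! r' \<le> lam ! r"
    using assms sorted_wrt_nth_less[OF assms(1), of r r'] by (auto simp: cells_def)
  with assms show ?thesis by (auto simp: cells_def)
qed (use assms in simp)

lemma Tab_row_less:
  assumes T: "T \<in> Tab lam" and "(r, c') \<in> cells lam" "c < c'"
  shows "T (r, c') < T (r, c)"
proof -
  have adjacent: "T (r, Suc k) < T (r, k)" if "Suc k \<le> c'" for k
    using T cells_left_closed[OF assms(2) that] by (auto simp: Tab_def)
  from \<open>c < c'\<close> have "Suc c \<le> c'" by simp
  then show ?thesis
  proof (induction c' rule: dec_induct)
    case (step n)
    then show ?case using adjacent[of n] by simp
  qed (use adjacent \<open>Suc c \<le> c'\<close> in simp)
qed

lemma Tab_col_less:
  assumes T: "T \<in> Tab lam" and srt: "sorted_wrt (\<ge>) lam" and "(r', c) \<in> cells lam" "r < r'"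
  shows "T (r', c) < T (r, c)"
proof -
  have adjacent: "T (Suc k, c) < T (k, c)" if "Suc k \<le> r'" for k
    using T cells_down_closed[OF srt assms(3) that] by (auto simp: Tab_def)
  from \<open>r < r'\<close> have "Suc r \<le> r'" by simp
  then show ?thesis
  proof (induction r' rule: dec_induct)
    case (step n)
    then show ?case using adjacent[of n] by simp
  qed (use adjacent \<open>Suc r \<le> r'\<close> in simp)
qed

text \<open>If \<open>i\<close> lies in a higher row than \<open>i + 1\<close>, it also lies strictly to its left: otherwise the
  cell in the row of \<open>i + 1\<close> and the column of \<open>i\<close> would carry an entry strictly between them.\<close>

lemma content_gap_ge_2:
  assumes T: "T \<in> Tab lam" and srt: "sorted_wrt (\<ge>) lam"
    and i: "1 \<le> i" "i + 1 \<le> sum_list lam"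
    and above: "rw lam T (i + 1) < rw lam T i" and "cl lam T i \<noteq> cl lam T (i + 1)"
  shows "2 \<le> CT lam T (i + 1) - CT lam T i"
proof -
  obtain ri ci where pi: "pos lam T i = (ri, ci)" by force
  obtain rj cj where pj: "pos lam T (i + 1) = (rj, cj)" by force
  have ci: "(ri, ci) \<in> cells lam" "T (ri, ci) = i"
    using pos_in_cells[OF T, of i] entry_pos[OF T, of i] i pi by auto
  have cj: "(rj, cj) \<in> cells lam" "T (rj, cj) = i + 1"
    using pos_in_cells[OF T, of "i + 1"] entry_pos[OF T, of "i + 1"] i pj by auto
  have "rj < ri" "ci \<noteq> cj"
    using assms(5,6) pi pj by (simp_all add: rw_def cl_def)
  have "ci < cj"
  proof (rule ccontr)
    assume "\<not> ci < cj"
    with \<open>ci \<noteq> cj\<close> have "cj < ci" by simp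
    have cell: "(rj, ci) \<in> cells lam"
      using cells_down_closed[OF srt ci(1)] \<open>rj < ri\<close> by simp
    have "i < T (rj, ci)"
      using Tab_col_less[OF T srt ci(1) \<open>rj < ri\<close>] ci(2) by simp
    moreover have "T (rj, ci) < i + 1"
      using Tab_row_less[OF T cell \<open>cj < ci\<close>] cj(2) by simp
    ultimately show False by simp
  qed
  with \<open>rj < ri\<close> pi pj show ?thesis
    by (simp add: CT_def rw_def cl_def)
qed

definition apart :: "nat list \<Rightarrow> tableau \<Rightarrow> nat \<Rightarrow> bool" where
  "apart lam T i \<longleftrightarrow> rw lam T i \<noteq> rw lam T (i + 1) \<and> cl lam T i \<noteq> cl lam T (i + 1)"

lemma apart_swp [simp]: "apart lam (swp T i (i + 1)) i \<longleftrightarrow> apart lam T i"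
  by (auto simp: apart_def rw_swp cl_swp)

lemma swp_in_Tab:
  assumes T: "T \<in> Tab lam" and i: "1 \<le> i" "i + 1 \<le> sum_list lam" and "apart lam T i"
  shows "swp T i (i + 1) \<in> Tab lam"
proof -
  let ?\<tau> = "id(i := i + 1, i + 1 := i)" and ?S = "swp T i (i + 1)"
  have "bij_betw ?\<tau> {1..sum_list lam} {1..sum_list lam}"
    by (rule bij_betw_byWitness[where f' = ?\<tau>]) (use i in auto)
  then have bij: "bij_betw ?S (cells lam) {1..sum_list lam}"
    using T bij_betw_trans by (auto simp: Tab_def swp_eq_comp)
  have less: "?S y < ?S x"
    if "x \<in> cells lam" "y \<in> cells lam" "T y < T x" "fst x = fst y \<or> snd x = snd y" for x y
  proof -
    have "\<not> (T y = i \<and> T x = i + 1)"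
    proof
      assume "T y = i \<and> T x = i + 1"
      then have "pos lam T i = y" "pos lam T (i + 1) = x"
        using pos_entry[OF T] that(1,2) by metis+
      with that(4) \<open>apart lam T i\<close> show False
        by (auto simp: apart_def rw_def cl_def)
    qed
    with \<open>T y < T x\<close> show ?thesis
      by (auto simp: swp_def)
  qed
  have "?S (r, c + 1) < ?S (r, c)" if "(r, c + 1) \<in> cells lam" for r c
    using less[of "(r, c)" "(r, c + 1)"] that T cells_left_closed[OF that]
    by (auto simp: Tab_def)
  moreover have "?S (r + 1, c) < ?S (r, c)" if "(r + 1, c) \<in> cells lam" for r c
  proof -
    have "T (r + 1, c) < T (r, c)" using T that by (auto simp: Tab_def)
    then have "(r, c) \<in> cells lam"
      by (rule contrapos_pp) (use T in \<open>auto simp: Tab_def\<close>)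
    with less[of "(r, c)" "(r + 1, c)"] that \<open>T (r + 1, c) < T (r, c)\<close> show ?thesis
      by auto
  qed
  moreover have "\<forall>x. x \<notin> cells lam \<longrightarrow> ?S x = 0"
    using T i by (auto simp: Tab_def swp_def)
  ultimately show ?thesis
    using bij by (simp add: Tab_def)
qed

lemma apart_obtain_above:
  assumes X: "X \<in> Tab lam" and i: "1 \<le> i" "i + 1 \<le> sum_list lam" and "apart lam X i"
  obtains U where "U \<in> Tab lam" "rw lam U (i + 1) < rw lam U i" "cl lam U i \<noteq> cl lam U (i + 1)"
    "X = U \<or> X = swp U i (i + 1)"
proof (cases "rw lam X (i + 1) < rw lam X i")
  case True
  with \<open>apart lam X i\<close> show ?thesis
    using that[OF X] by (auto simp: apart_def)
next
  case False
  with \<open>apart lam X i\<close> show ?thesis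
    using that[OF swp_in_Tab[OF assms]] by (auto simp: apart_def rw_swp cl_swp)
qed

definition content_pairs :: "nat \<Rightarrow> (nat \<Rightarrow> int) \<Rightarrow> (nat \<times> nat) set" where
  "content_pairs N c = {(a, b). 1 \<le> a \<and> a < b \<and> b \<le> N \<and> c a - c b \<le> -2}"

lemma nu_eq_prod_content_pairs:
  "nu lam T = (\<Prod>(a, b) \<in> content_pairs (sum_list lam) (CT lam T).
                 pair_weight s_ind (CT lam T b - CT lam T a))"
  unfolding nu_def content_pairs_def pair_weight_def Let_def ..

lemma prod_content_pairs_swap:
  fixes c :: "nat \<Rightarrow> int" and g :: "int \<Rightarrow> 'a::comm_monoid_mult"
  assumes i: "1 \<le> i" "i + 1 \<le> N" and gap: "2 \<le> c (i + 1) - c i"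
  defines "c' \<equiv> c \<circ> id(i := i + 1, i + 1 := i)"
  shows "(\<Prod>(a, b) \<in> content_pairs N c. g (c b - c a))
       = g (c (i + 1) - c i) * (\<Prod>(a, b) \<in> content_pairs N c'. g (c' b - c' a))"
proof -
  let ?\<tau> = "id(i := i + 1, i + 1 := i)"
  have "finite (content_pairs N c)"
    by (rule finite_subset[of _ "{..N} \<times> {..N}"]) (auto simp: content_pairs_def)
  moreover have "(i, i + 1) \<in> content_pairs N c"
    using i gap by (simp add: content_pairs_def)
  ultimately have "(\<Prod>(a, b) \<in> content_pairs N c. g (c b - c a))
      = g (c (i + 1) - c i) * (\<Prod>(a, b) \<in> content_pairs N c - {(i, i + 1)}. g (c b - c a))"
    by (simp add: prod.remove)
  also have "(\<Prod>(a, b) \<in> content_pairs N c - {(i, i + 1)}. g (c b - c a))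
      = (\<Prod>(a, b) \<in> content_pairs N c'. g (c' b - c' a))"
    by (rule prod.reindex_bij_witness[of _ "map_prod ?\<tau> ?\<tau>" "map_prod ?\<tau> ?\<tau>"])
       (use i gap in \<open>auto simp: content_pairs_def c'_def split: if_splits\<close>)
  finally show ?thesis .
qed

lemma nu_swp:
  assumes "1 \<le> i" "i + 1 \<le> sum_list lam" "2 \<le> CT lam T (i + 1) - CT lam T i"
  shows "nu lam T = pair_weight s_ind (CT lam T (i + 1) - CT lam T i) * nu lam (swp T i (i + 1))"
  unfolding nu_eq_prod_content_pairs CT_swp by (rule prod_content_pairs_swap[OF assms])

lemma s_ind_nonzero: "s_ind \<noteq> 0"
  by (simp add: s_ind_def Zero_fract_def eq_fract)

lemma s_ind_power_neq_1:
  assumes "0 < n"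
  shows "s_ind ^ n \<noteq> 1"
proof
  have "s_ind ^ n = Fract ([:0, 1:] ^ n) 1"
    by (induction n) (simp_all add: s_ind_def One_fract_def)
  moreover assume "s_ind ^ n = 1"
  ultimately have "([:0, 1:] ^ n :: rat poly) = 1"
    by (simp add: One_fract_def eq_fract)
  then have "degree ([:0, 1:] ^ n :: rat poly) = 0" by simp
  with \<open>0 < n\<close> show False by (simp add: degree_power_eq)
qed

lemma s_ind_powi_neq_1:
  assumes "m \<noteq> 0"
  shows "s_ind powi m \<noteq> 1"
proof (cases "0 < m")
  case True
  then show ?thesis using s_ind_power_neq_1[of "nat m"] by (simp add: power_int_def)
next
  case False
  then show ?thesis using assms s_ind_power_neq_1[of "nat (- m)"]
    by (simp add: power_int_def power_inverse)
qed

lemma hcoeff_nonzero_cases: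
  "hcoeff q lam i T T' \<noteq> 0 \<Longrightarrow> T' = T \<or> T' = swp T i (i + 1) \<and> apart lam T i"
  by (auto simp: hcoeff_def apart_def Let_def split: if_splits)

lemma hcoeff_inverse_hcoeff_not_apart:
  "\<not> apart lam T i \<Longrightarrow> hcoeff (inverse s_ind) lam i T T * hcoeff s_ind lam i T T = 1"
  using s_ind_nonzero by (auto simp: hcoeff_def apart_def)

lemma hcoeff_above:
  assumes above: "rw lam U (i + 1) < rw lam U i" and cl: "cl lam U i \<noteq> cl lam U (i + 1)"
    and VU: "swp U i (i + 1) \<noteq> U"
  defines "V \<equiv> swp U i (i + 1)" and "m \<equiv> CT lam U (i + 1) - CT lam U i"
  shows "hcoeff q lam i U U = diag_coeff q m" and "hcoeff q lam i U V = q * pair_weight q m"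
    and "hcoeff q lam i V V = q - 1 - diag_coeff q m" and "hcoeff q lam i V U = 1"
proof -
  have V: "rw lam V i = rw lam U (i + 1)" "rw lam V (i + 1) = rw lam U i"
    "cl lam V i = cl lam U (i + 1)" "cl lam V (i + 1) = cl lam U i"
    "CT lam V i = CT lam U (i + 1)" "CT lam V (i + 1) = CT lam U i" "swp V i (i + 1) = U"
    by (simp_all add: V_def rw_swp cl_swp CT_swp)
  show "hcoeff q lam i U U = diag_coeff q m"
    using above cl by (simp add: hcoeff_def Let_def diag_coeff_def m_def)
  show "hcoeff q lam i U V = q * pair_weight q m"
    using above cl VU unfolding V_def hcoeff_def
    by (simp add: Let_def pair_weight_def m_def mult_ac)
  show "hcoeff q lam i V V = q - 1 - diag_coeff q m"
    using above cl V by (simp add: hcoeff_def Let_def diag_coeff_def m_def)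
  show "hcoeff q lam i V U = 1"
    using above cl V VU by (simp add: hcoeff_def V_def)
qed

lemma hcoeff_block:
  assumes U: "U \<in> Tab lam" and srt: "sorted_wrt (\<ge>) lam"
    and i: "1 \<le> i" "i + 1 \<le> sum_list lam"
    and above: "rw lam U (i + 1) < rw lam U i" and cl: "cl lam U i \<noteq> cl lam U (i + 1)"
    and XY: "X \<in> {U, swp U i (i + 1)}" "Y \<in> {U, swp U i (i + 1)}"
  defines "V \<equiv> swp U i (i + 1)"
  shows "hcoeff (inverse s_ind) lam i X U * hcoeff s_ind lam i Y U * nu lam U
       + hcoeff (inverse s_ind) lam i X V * hcoeff s_ind lam i Y V * nu lam V
       = (if X = Y then nu lam X else 0)"
proof -
  define m where "m = CT lam U (i + 1) - CT lam U i"
  have m: "2 \<le> m"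
    using content_gap_ge_2[OF U srt i above cl] by (simp add: m_def)
  have "V \<noteq> U"
    using swp_neq[OF U] i by (simp add: V_def)
  note coeff = hcoeff_above[OF above cl \<open>V \<noteq> U\<close>[unfolded V_def], folded V_def m_def]
  have nu: "nu lam U = pair_weight s_ind m * nu lam V"
    using nu_swp[OF i] m by (simp add: m_def V_def)
  have "m \<noteq> 0" using m by simp
  note identities = adjoint_block_identities[OF s_ind_nonzero s_ind_powi_neq_1[OF this], of "nu lam V"]
  from XY consider "X = U" "Y = U" | "X = U" "Y = V" | "X = V" "Y = U" | "X = V" "Y = V"
    by (auto simp: V_def)
  then show ?thesis
  proof cases
    case 1
    then show ?thesis using identities(1) by (simp add: coeff nu)
  next
    case 2
    then show ?thesis using identities(2) \<open>V \<noteq> U\<close> by (simp add: coeff nu)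
  next
    case 3
    then show ?thesis using identities(3) \<open>V \<noteq> U\<close> by (simp add: coeff nu add.commute)
  next
    case 4
    then show ?thesis using identities(4) by (simp add: coeff nu)
  qed
qed

lemma hcoeff_nonzero_source:
  "hcoeff q lam i T T' \<noteq> 0 \<Longrightarrow> T = T' \<or> T = swp T' i (i + 1)"
  using hcoeff_nonzero_cases by fastforce

lemma sum_hcoeff_support:
  assumes "S \<subseteq> Tab lam" "T \<in> S" "swp T i (i + 1) \<in> S \<or> \<not> apart lam T i"
  shows "(\<Sum>T'\<in>Tab lam. hcoeff q lam i T T' * g T') = (\<Sum>T'\<in>S. hcoeff q lam i T T' * g T')"
  by (rule sum.mono_neutral_right[OF finite_Tab assms(1)])
     (use assms hcoeff_nonzero_cases[of q lam i T] in auto)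

lemma hcoeff_orthogonal_not_apart:
  assumes X: "X \<in> Tab lam" and "\<not> apart lam X i"
  shows "(\<Sum>T\<in>Tab lam. hcoeff (inverse s_ind) lam i X T * (hcoeff s_ind lam i Y T * nu lam T))
       = (if X = Y then nu lam X else 0)"
proof -
  have "(\<Sum>T\<in>Tab lam. hcoeff (inverse s_ind) lam i X T * (hcoeff s_ind lam i Y T * nu lam T))
      = hcoeff (inverse s_ind) lam i X X * (hcoeff s_ind lam i Y X * nu lam X)"
    using sum_hcoeff_support[of "{X}" lam X i] X assms(2) by simp
  moreover have "hcoeff s_ind lam i Y X = 0" if "Y \<noteq> X"
    using hcoeff_nonzero_cases[of s_ind lam i Y X] that assms(2) by (metis apart_swp)
  ultimately show ?thesis
    using hcoeff_inverse_hcoeff_not_apart[OF assms(2)] by (auto simp: mult.assoc[symmetric])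
qed

lemma hcoeff_orthogonal_apart:
  assumes X: "X \<in> Tab lam" and srt: "sorted_wrt (\<ge>) lam"
    and i: "1 \<le> i" "i + 1 \<le> sum_list lam" and "apart lam X i"
  shows "(\<Sum>T\<in>Tab lam. hcoeff (inverse s_ind) lam i X T * (hcoeff s_ind lam i Y T * nu lam T))
       = (if X = Y then nu lam X else 0)"
proof -
  let ?f = "\<lambda>T. hcoeff (inverse s_ind) lam i X T * (hcoeff s_ind lam i Y T * nu lam T)"
  obtain U where U: "U \<in> Tab lam" "rw lam U (i + 1) < rw lam U i" "cl lam U i \<noteq> cl lam U (i + 1)"
    and XU: "X = U \<or> X = swp U i (i + 1)"
    using apart_obtain_above[OF assms(1,3,4,5)] by blast
  define V where "V = swp U i (i + 1)"
  have UV: "{X, swp X i (i + 1)} = {U, V}"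
    using XU by (auto simp: V_def)
  then have "V \<in> Tab lam"
    using X swp_in_Tab[OF assms(1,3,4,5)] by auto
  have "V \<noteq> U"
    using swp_neq[OF U(1)] i by (simp add: V_def)
  have "(\<Sum>T\<in>Tab lam. ?f T) = (\<Sum>T\<in>{U, V}. ?f T)"
    by (rule sum_hcoeff_support) (use UV U(1) \<open>V \<in> Tab lam\<close> in auto)
  also have "\<dots> = ?f U + ?f V"
    using \<open>V \<noteq> U\<close> by simp
  finally have sum_UV: "(\<Sum>T\<in>Tab lam. ?f T) = ?f U + ?f V" .
  show ?thesis
  proof (cases "Y \<in> {U, V}")
    case True
    with XU show ?thesis
      using sum_UV hcoeff_block[OF U(1) srt i U(2,3), of X Y, folded V_def]
      by (simp add: V_def mult.assoc)
  next
    case False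
    then have "hcoeff s_ind lam i Y U = 0" "hcoeff s_ind lam i Y V = 0" "X \<noteq> Y"
      using hcoeff_nonzero_source[of s_ind lam i Y U] hcoeff_nonzero_source[of s_ind lam i Y V] XU
      by (auto simp: V_def)
    then show ?thesis using sum_UV by simp
  qed
qed

lemma hcoeff_orthogonal:
  assumes "X \<in> Tab lam" "sorted_wrt (\<ge>) lam" "1 \<le> i" "i + 1 \<le> sum_list lam"
  shows "(\<Sum>T\<in>Tab lam. hcoeff (inverse s_ind) lam i X T * hcoeff s_ind lam i Y T * nu lam T)
       = (if X = Y then nu lam X else 0)"
  using hcoeff_orthogonal_apart[OF assms] hcoeff_orthogonal_not_apart[OF assms(1)]
  by (cases "apart lam X i") (simp_all add: mult.assoc)

theorem proposition6p2:
  fixes N :: nat and lam :: "nat list" and P Q :: "tableau \<Rightarrow> ratfun" and i :: nat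
  assumes "N \<ge> 2" and "is_partition lam N" and "1 \<le> i" and "i \<le> N - 1"
  shows "pairing lam (act (inverse s_ind) lam i P) (act s_ind lam i Q) = pairing lam P Q"
proof -
  have srt: "sorted_wrt (\<ge>) lam" and "sum_list lam = N"
    using assms(2) by (auto simp: is_partition_def)
  with assms have i: "1 \<le> i" "i + 1 \<le> sum_list lam" by auto
  show ?thesis
    unfolding pairing_def act_def
    by (rule invariant_weighted_pairing[OF finite_Tab hcoeff_orthogonal[OF _ srt i]])
qed

end
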